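(* Let $p_{max}>0$ and consider barotropic equations of state $\rho:[0,p_{max}]\to[0,\infty)$ which are continuous and piecewise $\mathcal{C}^1$ on $[0,p_{max}]$, satisfy $\rho(p)>0$ for $p\in(0,p_{max}]$, for which $\Gamma(p)=\int_0^p \rho(p')^{-1}\,dp'$ exists (is finite) for $p\in[0,p_{max}]$, and for which $\lim_{p\to 0}\rho(p)^{-1}p$ exists. For $i\in\{-1,0,1\}$ let $\{I_i\le 0\}$, $\{I_i\equiv 0\}$, $\{I_i\ge 0\}$ denote the sets of such equations of state for which $I_i(p)\le 0$, $I_i(p)=0$, resp. $I_i(p)\ge 0$ for all $p\le p_{max}$ (wherever defined). Then $$\{I_1\le 0\}\subset\{I_0\le 0\}\subset\{I_{-1}\le 0\},\qquad \{I_1\equiv 0\}=\{I_0\equiv 0\}=\{I_{-1}\equiv 0\},\qquad \{I_1\ge 0\}\subset\{I_0\ge 0\}\subset\{I_{-1}\ge 0\}.$$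
   Context: For such an equation of state define $\Gamma(p)=\int_0^p \rho(p')^{-1}dp'$ and $I_{-1}(p)=7\int_0^p\Gamma(p')\,dp'-6\,\Gamma(p)\,p$, $I_0(p)=\Gamma(p)-6\rho(p)^{-1}p$ (with $I_0(0):=\lim_{p\to0}I_0(p)$), and $I_1(p)=6p\,\rho^{-2}\frac{d\rho}{dp}-5\rho^{-1}$ (defined where $\rho$ is differentiable). *)

theory Defs
  imports "HOL-Analysis.Analysis"
begin

definition EOS :: "real \<Rightarrow> (real \<Rightarrow> real) set" where
  "EOS pmax = {\<rho>.
     continuous_on {0..pmax} \<rho>
   \<and> (\<exists>S. finite S \<and> (\<forall>p\<in>{0<..<pmax} - S. \<rho> differentiable (at p))
          \<and> continuous_on ({0<..<pmax} - S) (deriv \<rho>))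
   \<and> (\<forall>p\<in>{0..pmax}. 0 \<le> \<rho> p)
   \<and> (\<forall>p\<in>{0<..pmax}. 0 < \<rho> p)
   \<and> (\<forall>p\<in>{0..pmax}. (\<lambda>q. inverse (\<rho> q)) integrable_on {0..p})
   \<and> (\<exists>L. ((\<lambda>q. inverse (\<rho> q) * q) \<longlongrightarrow> L) (at_right 0))}"

definition Gam :: "(real \<Rightarrow> real) \<Rightarrow> real \<Rightarrow> real" where
  "Gam \<rho> p = integral {0..p} (\<lambda>q. inverse (\<rho> q))"

definition Im1 :: "(real \<Rightarrow> real) \<Rightarrow> real \<Rightarrow> real" where
  "Im1 \<rho> p = 7 * integral {0..p} (Gam \<rho>) - 6 * Gam \<rho> p * p"

definition I0 :: "(real \<Rightarrow> real) \<Rightarrow> real \<Rightarrow> real" where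
  "I0 \<rho> p = (if p = 0 then Lim (at_right 0) (\<lambda>q. Gam \<rho> q - 6 * inverse (\<rho> q) * q)
              else Gam \<rho> p - 6 * inverse (\<rho> p) * p)"

definition I1 :: "(real \<Rightarrow> real) \<Rightarrow> real \<Rightarrow> real" where
  "I1 \<rho> p = 6 * p * inverse (\<rho> p ^ 2) * deriv \<rho> p - 5 * inverse (\<rho> p)"

text \<open>Points where I1 is defined: interior points where rho is differentiable.\<close>
definition dom1 :: "real \<Rightarrow> (real \<Rightarrow> real) \<Rightarrow> real set" where
  "dom1 pmax \<rho> = {p. 0 < p \<and> p < pmax \<and> \<rho> differentiable (at p)}"

end

theory Submission
  imports Defs
begin

text \<open>Differentiating the definitions gives \<open>Im1' = I0\<close> and \<open>I0' = I1\<close> wherever \<open>\<rho>\<close> is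
  differentiable, because \<open>\<Gamma>' = 1/\<rho>\<close>. Moreover \<open>Im1(0) = 0\<close> and \<open>I0(p) \<rightarrow> 0\<close> as \<open>p \<rightarrow> 0\<close>: the
  limit \<open>L\<close> of \<open>p/\<rho>(p)\<close> must vanish, since otherwise \<open>1/\<rho>(p) \<ge> L/(2p)\<close> near \<open>0\<close> and \<open>\<Gamma>\<close>
  would diverge logarithmically. A sign of \<open>I1\<close> therefore propagates to \<open>I0\<close>, and one of \<open>I0\<close>
  to \<open>Im1\<close>, by integrating from \<open>0\<close>; the finitely many points where \<open>\<rho>\<close> is not differentiable
  are harmless because \<open>I0\<close> is continuous on \<open>(0, pmax]\<close>. Conversely, if \<open>Im1\<close> or \<open>I0\<close>
  vanishes identically, so does its derivative.\<close>

lemma DERIV_nonneg_imp_le_finite_exceptions: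
  fixes f f' :: "real \<Rightarrow> real"
  assumes "finite S" "a \<le> b" "continuous_on {a..b} f"
    and "\<And>x. x \<in> {a<..<b} - S \<Longrightarrow> (f has_real_derivative f' x) (at x)"
    and "\<And>x. x \<in> {a<..<b} - S \<Longrightarrow> 0 \<le> f' x"
  shows "f a \<le> f b"
proof -
  define g where "g x = (if x \<in> {a<..<b} - S then f' x else 0)" for x
  have "(g has_integral (f b - f a)) {a..b}"
  proof (rule fundamental_theorem_of_calculus_interior_strong[OF assms(1,2) _ assms(3)])
    fix x assume "x \<in> {a<..<b} - S"
    then show "(f has_vector_derivative g x) (at x)"
      using assms(4) by (simp add: g_def has_real_derivative_iff_has_vector_derivative)
  qed
  moreover have "0 \<le> g x" for x
    using assms(5) by (simp add: g_def)
  ultimately have "0 \<le> f b - f a"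
    by (rule has_integral_nonneg)
  then show ?thesis
    by simp
qed

lemma nonneg_if_tendsto_0_at_right_and_DERIV_nonneg:
  fixes f f' :: "real \<Rightarrow> real"
  assumes "finite S" "continuous_on {0<..b} f" "(f \<longlongrightarrow> 0) (at_right 0)"
    and "\<And>x. x \<in> {0<..<b} - S \<Longrightarrow> (f has_real_derivative f' x) (at x)"
    and "\<And>x. x \<in> {0<..<b} - S \<Longrightarrow> 0 \<le> f' x"
    and "p \<in> {0<..b}"
  shows "0 \<le> f p"
proof (rule tendsto_upperbound[OF assms(3)])
  have "f a \<le> f p" if "0 < a" "a < p" for a
  proof (rule DERIV_nonneg_imp_le_finite_exceptions[of S a p f f'])
    show "continuous_on {a..p} f"
      using assms(2) by (rule continuous_on_subset) (use that assms(6) in auto)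
    fix x assume "x \<in> {a<..<p} - S"
    then have "x \<in> {0<..<b} - S"
      using that assms(6) by auto
    then show "(f has_real_derivative f' x) (at x)" and "0 \<le> f' x"
      by (simp_all add: assms(4,5))
  qed (use that assms(1) in auto)
  then show "\<forall>\<^sub>F a in at_right 0. f a \<le> f p"
    using assms(6) by (auto simp: eventually_at_right_field)
qed simp

lemma has_integral_inverse_real:
  assumes "0 < a" "a \<le> b"
  shows "(inverse has_integral (ln b - ln a)) {a..b::real}"
proof (rule fundamental_theorem_of_calculus)
  fix x assume "x \<in> {a..b}"
  then show "(ln has_vector_derivative inverse x) (at x within {a..b})"
    using assms by (auto intro!: has_field_derivative_at_within DERIV_ln
                         simp: has_real_derivative_iff_has_vector_derivative[symmetric])
qed fact

lemma integrable_at_right_0_imp_tendsto_mult_eq_0: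
  fixes f :: "real \<Rightarrow> real"
  assumes "0 < d" "f integrable_on {0..d}" "\<And>q. q \<in> {0..d} \<Longrightarrow> 0 \<le> f q"
    and lim: "((\<lambda>q. f q * q) \<longlongrightarrow> L) (at_right 0)"
  shows "L = 0"
proof (rule ccontr)
  have "0 \<le> L"
    using assms
    by (intro tendsto_lowerbound[OF lim]) (auto simp: eventually_at_right_field intro!: exI[of _ d])
  moreover assume "L \<noteq> 0"
  ultimately have "0 < L" by simp
  then have "\<forall>\<^sub>F q in at_right 0. L/2 < f q * q \<and> q < d"
    using assms(1) by (intro eventually_conj order_tendstoD(1)[OF lim])
      (auto simp: eventually_at_right_field intro!: exI[of _ d])
  then obtain \<delta> where "0 < \<delta>" and \<delta>: "\<And>q. 0 < q \<Longrightarrow> q < \<delta> \<Longrightarrow> L/2 < f q * q \<and> q < d"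
    by (auto simp: eventually_at_right_field)
  define c where "c = \<delta>/2"
  have "0 < c" "c < \<delta>"
    using \<open>0 < \<delta>\<close> by (simp_all add: c_def)
  have "c < d"
    using \<delta>[of c] \<open>0 < c\<close> \<open>c < \<delta>\<close> by simp
  have below_c: "L/2 < f q * q" if "0 < q" "q \<le> c" for q
    using \<delta>[of q] that \<open>c < \<delta>\<close> by simp
  have bound: "L/2 * (ln c - ln e) \<le> integral {0..d} f" if "0 < e" "e \<le> c" for e
  proof -
    have log: "((\<lambda>q. L/2 * inverse q) has_integral L/2 * (ln c - ln e)) {e..c}"
      using has_integral_inverse_real[OF that] by (rule has_integral_cmult_real)
    then have "L/2 * (ln c - ln e) = integral {e..c} (\<lambda>q. L/2 * inverse q)"
      by (rule integral_unique[symmetric])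
    also have "\<dots> \<le> integral {e..c} f"
    proof (rule integral_le)
      fix q assume q: "q \<in> {e..c}"
      then have "L/2 < f q * q" "0 < q"
        using below_c that by auto
      then show "L/2 * inverse q \<le> f q"
        by (simp add: field_simps)
    qed (use log integrable_on_subinterval[OF assms(2)] \<open>c < d\<close> that in auto)
    also have "\<dots> \<le> integral {0..d} f"
      using \<open>c < d\<close> that assms by (intro integral_subset_le integrable_on_subinterval[OF assms(2)]) auto
    finally show ?thesis .
  qed
  have "LIM e at_right 0. - ln (e::real) :> at_top"
    using ln_at_0 filterlim_uminus_at_bot[of ln] by simp
  then have "LIM e at_right 0. ln c + - ln (e::real) :> at_top"
    by (rule filterlim_tendsto_add_at_top[OF tendsto_const])
  then have "LIM e at_right 0. L/2 * (ln c - ln e) :> at_top"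
    using \<open>0 < L\<close> by (intro filterlim_tendsto_pos_mult_at_top[OF tendsto_const]) simp_all
  then have "\<forall>\<^sub>F e in at_right 0. integral {0..d} f < L/2 * (ln c - ln e)"
    unfolding filterlim_at_top_dense by blast
  moreover have "\<forall>\<^sub>F e in at_right 0. L/2 * (ln c - ln e) \<le> integral {0..d} f"
    unfolding eventually_at_right_field using \<open>0 < c\<close> bound less_imp_le by blast
  ultimately have "\<forall>\<^sub>F e in at_right (0::real). False"
    by eventually_elim linarith
  then show False
    by simp
qed

context
  fixes pmax :: real and \<rho> :: "real \<Rightarrow> real"
  assumes pmax_pos: "0 < pmax" and eos: "\<rho> \<in> EOS pmax"
begin

lemma inverse_rho_continuous_on: "continuous_on {0<..pmax} (\<lambda>q. inverse (\<rho> q))"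
proof (rule continuous_on_inverse)
  have "continuous_on {0..pmax} \<rho>"
    using eos by (simp add: EOS_def)
  then show "continuous_on {0<..pmax} \<rho>"
    by (rule continuous_on_subset) auto
  show "\<forall>q\<in>{0<..pmax}. \<rho> q \<noteq> 0"
    using eos unfolding EOS_def by fastforce
qed

lemma Gam_continuous_on: "continuous_on {0..pmax} (Gam \<rho>)"
  unfolding Gam_def[abs_def] using eos pmax_pos
  by (intro indefinite_integral_continuous_1) (auto simp: EOS_def)

lemma Gam_has_real_derivative:
  assumes "p \<in> {0<..<pmax}"
  shows "(Gam \<rho> has_real_derivative inverse (\<rho> p)) (at p)"
proof -
  have "continuous_on {0<..<pmax} (\<lambda>q. inverse (\<rho> q))"
    using inverse_rho_continuous_on by (rule continuous_on_subset) auto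
  then have "isCont (\<lambda>q. inverse (\<rho> q)) p"
    using assms by (simp add: continuous_on_eq_continuous_at)
  moreover have at_p: "at p within {0..pmax} = at p"
    using assms by (auto intro!: at_within_interior)
  ultimately have "(Gam \<rho> has_vector_derivative inverse (\<rho> p)) (at p within {0..pmax} - {})"
    unfolding Gam_def[abs_def] using eos pmax_pos assms
    by (intro integral_has_vector_derivative_continuous_at) (auto simp: EOS_def isCont_def continuous_within)
  then show ?thesis
    by (simp add: at_p has_real_derivative_iff_has_vector_derivative)
qed

lemma tendsto_inverse_rho_mult_0: "((\<lambda>q. inverse (\<rho> q) * q) \<longlongrightarrow> 0) (at_right 0)"
proof -
  obtain L where L: "((\<lambda>q. inverse (\<rho> q) * q) \<longlongrightarrow> L) (at_right 0)"
    using eos by (auto simp: EOS_def)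
  moreover have "L = 0"
    using eos pmax_pos by (intro integrable_at_right_0_imp_tendsto_mult_eq_0[OF _ _ _ L]) (auto simp: EOS_def)
  ultimately show ?thesis by simp
qed

lemma tendsto_Gam_minus_0: "((\<lambda>q. Gam \<rho> q - 6 * inverse (\<rho> q) * q) \<longlongrightarrow> 0) (at_right 0)"
proof -
  have "(Gam \<rho> \<longlongrightarrow> Gam \<rho> 0) (at 0 within {0..pmax})"
    using Gam_continuous_on pmax_pos by (simp add: continuous_on_def)
  then have "(Gam \<rho> \<longlongrightarrow> 0) (at_right 0)"
    by (simp add: at_within_Icc_at_right[OF pmax_pos] Gam_def)
  then show ?thesis
    using tendsto_diff[OF _ tendsto_mult_left[OF tendsto_inverse_rho_mult_0, of 6]]
    by (simp add: mult.assoc)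
qed

lemma I0_at_0: "I0 \<rho> 0 = 0"
  unfolding I0_def using tendsto_Lim[OF trivial_limit_at_right_real tendsto_Gam_minus_0] by simp

lemma I0_tendsto_0: "(I0 \<rho> \<longlongrightarrow> 0) (at_right 0)"
proof (rule Lim_transform_eventually[OF tendsto_Gam_minus_0])
  show "\<forall>\<^sub>F q in at_right 0. Gam \<rho> q - 6 * inverse (\<rho> q) * q = I0 \<rho> q"
    by (auto simp: I0_def eventually_at_right_field intro!: exI[of _ 1])
qed

lemma I0_continuous_on: "continuous_on {0<..pmax} (I0 \<rho>)"
proof (rule continuous_on_eq)
  have "continuous_on {0<..pmax} (Gam \<rho>)"
    using Gam_continuous_on by (rule continuous_on_subset) auto
  then show "continuous_on {0<..pmax} (\<lambda>q. Gam \<rho> q - 6 * inverse (\<rho> q) * q)"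
    by (intro continuous_on_diff continuous_on_mult continuous_on_const continuous_on_id
        inverse_rho_continuous_on) auto
qed (simp add: I0_def)

lemma I0_has_real_derivative:
  assumes "p \<in> dom1 pmax \<rho>"
  shows "(I0 \<rho> has_real_derivative I1 \<rho> p) (at p)"
proof -
  have p: "p \<in> {0<..<pmax}" and "\<rho> differentiable (at p)"
    using assms by (auto simp: dom1_def)
  then have "(\<rho> has_real_derivative deriv \<rho> p) (at p)"
    by (simp add: DERIV_deriv_iff_real_differentiable)
  moreover have "0 < \<rho> p"
    using eos p by (auto simp: EOS_def)
  ultimately have "((\<lambda>q. Gam \<rho> q - 6 * inverse (\<rho> q) * q) has_real_derivative
      inverse (\<rho> p) - 6 * (- (deriv \<rho> p * inverse (\<rho> p ^ 2)) * p + inverse (\<rho> p))) (at p)"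
    using Gam_has_real_derivative[OF p]
    by (auto intro!: derivative_eq_intros simp: power2_eq_square algebra_simps)
  then have "((\<lambda>q. Gam \<rho> q - 6 * inverse (\<rho> q) * q) has_real_derivative I1 \<rho> p) (at p)"
    by (simp add: I1_def algebra_simps)
  then show ?thesis
    by (rule has_field_derivative_transform_within_open[of _ _ _ "{0<..<pmax}"])
       (use p in \<open>auto simp: I0_def\<close>)
qed

lemma Im1_continuous_on: "continuous_on {0..pmax} (Im1 \<rho>)"
  unfolding Im1_def[abs_def]
  using Gam_continuous_on
  by (intro continuous_intros indefinite_integral_continuous_1 integrable_continuous_real)

lemma Im1_at_0: "Im1 \<rho> 0 = 0"
  by (simp add: Im1_def Gam_def)

lemma Im1_has_real_derivative:
  assumes p: "p \<in> {0<..<pmax}"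
  shows "(Im1 \<rho> has_real_derivative I0 \<rho> p) (at p)"
proof -
  have "((\<lambda>u. integral {0..u} (Gam \<rho>)) has_vector_derivative Gam \<rho> p) (at p within {0..pmax})"
    using Gam_continuous_on p by (intro integral_has_vector_derivative) auto
  moreover have "at p within {0..pmax} = at p"
    using p by (auto intro!: at_within_interior)
  ultimately have "((\<lambda>u. integral {0..u} (Gam \<rho>)) has_real_derivative Gam \<rho> p) (at p)"
    by (simp add: has_real_derivative_iff_has_vector_derivative)
  then have "(Im1 \<rho> has_real_derivative 7 * Gam \<rho> p - 6 * (inverse (\<rho> p) * p + Gam \<rho> p)) (at p)"
    unfolding Im1_def[abs_def] using Gam_has_real_derivative[OF p]
    by (auto intro!: derivative_eq_intros simp: algebra_simps)
  moreover have "I0 \<rho> p = 7 * Gam \<rho> p - 6 * (inverse (\<rho> p) * p + Gam \<rho> p)"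
    using p by (simp add: I0_def algebra_simps)
  ultimately show ?thesis by simp
qed

lemma I0_sign_if_I1_sign:
  assumes "\<forall>x\<in>dom1 pmax \<rho>. 0 \<le> c * I1 \<rho> x"
  shows "\<forall>p\<in>{0..pmax}. 0 \<le> c * I0 \<rho> p"
proof
  fix p assume p: "p \<in> {0..pmax}"
  obtain S where S: "finite S" "\<forall>x\<in>{0<..<pmax} - S. \<rho> differentiable (at x)"
    using eos by (auto simp: EOS_def)
  show "0 \<le> c * I0 \<rho> p"
  proof (cases "p = 0")
    case True
    then show ?thesis by (simp add: I0_at_0)
  next
    case False
    show ?thesis
    proof (rule nonneg_if_tendsto_0_at_right_and_DERIV_nonneg[of S pmax "\<lambda>x. c * I0 \<rho> x" "\<lambda>x. c * I1 \<rho> x"])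
      show "continuous_on {0<..pmax} (\<lambda>x. c * I0 \<rho> x)"
        by (intro continuous_on_mult_left I0_continuous_on)
      show "((\<lambda>x. c * I0 \<rho> x) \<longlongrightarrow> 0) (at_right 0)"
        using tendsto_mult_left[OF I0_tendsto_0, of c] by simp
      fix x assume "x \<in> {0<..<pmax} - S"
      then have x: "x \<in> dom1 pmax \<rho>"
        using S by (auto simp: dom1_def)
      then show "((\<lambda>x. c * I0 \<rho> x) has_real_derivative c * I1 \<rho> x) (at x)"
        by (intro DERIV_cmult I0_has_real_derivative)
      show "0 \<le> c * I1 \<rho> x"
        using assms x by blast
    qed (use S p False in auto)
  qed
qed

lemma Im1_sign_if_I0_sign:
  assumes "\<forall>x\<in>{0..pmax}. 0 \<le> c * I0 \<rho> x"
  shows "\<forall>p\<in>{0..pmax}. 0 \<le> c * Im1 \<rho> p"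
proof
  fix p assume p: "p \<in> {0..pmax}"
  have "c * Im1 \<rho> 0 \<le> c * Im1 \<rho> p"
  proof (rule DERIV_nonneg_imp_le_finite_exceptions[of "{}" 0 p "\<lambda>x. c * Im1 \<rho> x" "\<lambda>x. c * I0 \<rho> x"])
    show "continuous_on {0..p} (\<lambda>x. c * Im1 \<rho> x)"
      using continuous_on_subset[OF Im1_continuous_on, of "{0..p}"] p
      by (intro continuous_on_mult_left) auto
    fix x assume "x \<in> {0<..<p} - {}"
    then have x: "x \<in> {0<..<pmax}" and "0 \<le> c * I0 \<rho> x"
      using assms p by auto
    then show "0 \<le> c * I0 \<rho> x"
      and "((\<lambda>x. c * Im1 \<rho> x) has_real_derivative c * I0 \<rho> x) (at x)"
      using DERIV_cmult[OF Im1_has_real_derivative[OF x]] by auto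
  qed (use p in auto)
  then show "0 \<le> c * Im1 \<rho> p"
    by (simp add: Im1_at_0)
qed

lemma I1_eq_0_iff_I0_eq_0:
  "(\<forall>p\<in>dom1 pmax \<rho>. I1 \<rho> p = 0) \<longleftrightarrow> (\<forall>p\<in>{0..pmax}. I0 \<rho> p = 0)"
proof
  assume "\<forall>p\<in>dom1 pmax \<rho>. I1 \<rho> p = 0"
  then have "\<forall>p\<in>{0..pmax}. 0 \<le> I0 \<rho> p \<and> I0 \<rho> p \<le> 0"
    using I0_sign_if_I1_sign[of 1] I0_sign_if_I1_sign[of "-1"] by simp
  then show "\<forall>p\<in>{0..pmax}. I0 \<rho> p = 0"
    by force
next
  assume zero: "\<forall>p\<in>{0..pmax}. I0 \<rho> p = 0"
  show "\<forall>p\<in>dom1 pmax \<rho>. I1 \<rho> p = 0"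
  proof
    fix p assume p: "p \<in> dom1 pmax \<rho>"
    have "(I0 \<rho> has_real_derivative 0) (at p)"
      by (rule has_field_derivative_transform_within_open[OF DERIV_const, where S = "{0<..<pmax}"])
         (use zero p in \<open>auto simp: dom1_def\<close>)
    then show "I1 \<rho> p = 0"
      using DERIV_unique[OF I0_has_real_derivative[OF p]] by blast
  qed
qed

lemma I0_eq_0_iff_Im1_eq_0:
  "(\<forall>p\<in>{0..pmax}. I0 \<rho> p = 0) \<longleftrightarrow> (\<forall>p\<in>{0..pmax}. Im1 \<rho> p = 0)"
proof
  assume "\<forall>p\<in>{0..pmax}. I0 \<rho> p = 0"
  then have "\<forall>p\<in>{0..pmax}. 0 \<le> Im1 \<rho> p \<and> Im1 \<rho> p \<le> 0"
    using Im1_sign_if_I0_sign[of 1] Im1_sign_if_I0_sign[of "-1"] by simp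
  then show "\<forall>p\<in>{0..pmax}. Im1 \<rho> p = 0"
    by force
next
  assume zero: "\<forall>p\<in>{0..pmax}. Im1 \<rho> p = 0"
  have open_interval: "I0 \<rho> x = 0" if x: "x \<in> {0<..<pmax}" for x
  proof -
    have "(Im1 \<rho> has_real_derivative 0) (at x)"
      by (rule has_field_derivative_transform_within_open[OF DERIV_const, where S = "{0<..<pmax}"])
         (use zero x in auto)
    then show ?thesis
      using DERIV_unique[OF Im1_has_real_derivative[OF x]] by blast
  qed
  have "I0 \<rho> pmax = 0"
  proof (rule continuous_constant_on_closure[of "{pmax/2<..<pmax}" "I0 \<rho>"])
    show "continuous_on (closure {pmax/2<..<pmax}) (I0 \<rho>)"
      using I0_continuous_on by (rule continuous_on_subset) (use pmax_pos in auto)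
  qed (use open_interval pmax_pos in auto)
  then show "\<forall>p\<in>{0..pmax}. I0 \<rho> p = 0"
    using open_interval I0_at_0 by (metis atLeastAtMost_iff greaterThanLessThan_iff order_less_le)
qed

end

theorem proposition1:
  fixes pmax :: real
  assumes "pmax > 0"
  shows
   "{\<rho>\<in>EOS pmax. \<forall>p\<in>dom1 pmax \<rho>. I1 \<rho> p \<le> 0} \<subseteq> {\<rho>\<in>EOS pmax. \<forall>p\<in>{0..pmax}. I0 \<rho> p \<le> 0}
  \<and> {\<rho>\<in>EOS pmax. \<forall>p\<in>{0..pmax}. I0 \<rho> p \<le> 0} \<subseteq> {\<rho>\<in>EOS pmax. \<forall>p\<in>{0..pmax}. Im1 \<rho> p \<le> 0}
  \<and> {\<rho>\<in>EOS pmax. \<forall>p\<in>dom1 pmax \<rho>. I1 \<rho> p = 0} = {\<rho>\<in>EOS pmax. \<forall>p\<in>{0..pmax}. I0 \<rho> p = 0}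
  \<and> {\<rho>\<in>EOS pmax. \<forall>p\<in>{0..pmax}. I0 \<rho> p = 0} = {\<rho>\<in>EOS pmax. \<forall>p\<in>{0..pmax}. Im1 \<rho> p = 0}
  \<and> {\<rho>\<in>EOS pmax. \<forall>p\<in>dom1 pmax \<rho>. I1 \<rho> p \<ge> 0} \<subseteq> {\<rho>\<in>EOS pmax. \<forall>p\<in>{0..pmax}. I0 \<rho> p \<ge> 0}
  \<and> {\<rho>\<in>EOS pmax. \<forall>p\<in>{0..pmax}. I0 \<rho> p \<ge> 0} \<subseteq> {\<rho>\<in>EOS pmax. \<forall>p\<in>{0..pmax}. Im1 \<rho> p \<ge> 0}"
proof -
  have I0_le: "\<forall>p\<in>{0..pmax}. I0 \<rho> p \<le> 0"
    if "\<rho> \<in> EOS pmax" "\<forall>p\<in>dom1 pmax \<rho>. I1 \<rho> p \<le> 0" for \<rho>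
    using I0_sign_if_I1_sign[OF assms that(1), of "-1"] that(2) by simp
  have I0_ge: "\<forall>p\<in>{0..pmax}. I0 \<rho> p \<ge> 0"
    if "\<rho> \<in> EOS pmax" "\<forall>p\<in>dom1 pmax \<rho>. I1 \<rho> p \<ge> 0" for \<rho>
    using I0_sign_if_I1_sign[OF assms that(1), of 1] that(2) by simp
  have Im1_le: "\<forall>p\<in>{0..pmax}. Im1 \<rho> p \<le> 0"
    if "\<rho> \<in> EOS pmax" "\<forall>p\<in>{0..pmax}. I0 \<rho> p \<le> 0" for \<rho>
    using Im1_sign_if_I0_sign[OF assms that(1), of "-1"] that(2) by simp
  have Im1_ge: "\<forall>p\<in>{0..pmax}. Im1 \<rho> p \<ge> 0"
    if "\<rho> \<in> EOS pmax" "\<forall>p\<in>{0..pmax}. I0 \<rho> p \<ge> 0" for \<rho>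
    using Im1_sign_if_I0_sign[OF assms that(1), of 1] that(2) by simp
  show ?thesis
    using I0_le I0_ge Im1_le Im1_ge
      I1_eq_0_iff_I0_eq_0[OF assms] I0_eq_0_iff_Im1_eq_0[OF assms]
    by (intro conjI; blast)
qed

end
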